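(* Let $N\ge2$, $r\ge1$. The set $\mathcal{GL}(r,N)\subset(\mathbb{R}^N)^r$ of $r$-tuples $w=(w_1,\dots,w_r)$ of pairwise distinct points such that $f_w(x)=\sum_{k=1}^r\log|x-w_k|^2$ is a global Morse function on $\mathbb{R}^N\setminus\{w_1,\dots,w_r\}$ is dense in $(\mathbb{R}^N)^r$.
   Context: A function $g$ is a (local) Morse function if all its critical points have nondegenerate Hessian; it is a global Morse function if moreover its critical values at distinct critical points are pairwise distinct. $|\cdot|$ is the Euclidean norm. *)

theory Defs
  imports "HOL-Analysis.Analysis"
begin

definition grad :: "(real^'n \<Rightarrow> real) \<Rightarrow> real^'n \<Rightarrow> real^'n" where
  "grad g x = (\<chi> i. frechet_derivative g (at x) (axis i 1))"

definition morse_on :: "(real^'n \<Rightarrow> real) \<Rightarrow> (real^'n) set \<Rightarrow> bool" where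
  "morse_on g U \<longleftrightarrow> open U \<and> (\<forall>x\<in>U. g differentiable (at x)) \<and>
     (\<forall>x\<in>U. grad g x = 0 \<longrightarrow> (\<exists>H. (grad g has_derivative H) (at x) \<and> inj H))"

definition global_morse_on :: "(real^'n \<Rightarrow> real) \<Rightarrow> (real^'n) set \<Rightarrow> bool" where
  "global_morse_on g U \<longleftrightarrow> morse_on g U \<and>
     (\<forall>x\<in>U. \<forall>y\<in>U. grad g x = 0 \<and> grad g y = 0 \<and> x \<noteq> y \<longrightarrow> g x \<noteq> g y)"

definition f_w :: "real^'n^'r \<Rightarrow> real^'n \<Rightarrow> real" where
  "f_w w x = (\<Sum>k\<in>UNIV. ln ((norm (x - w $ k))\<^sup>2))"

definition GL :: "(real^'n^'r) set" where
  "GL = {w. inj (\<lambda>k. w $ k) \<and> global_morse_on (f_w w) (UNIV - range (\<lambda>k. w $ k))}"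

end

theory Submission
  imports Defs
begin

text \<open>Let \<open>B\<close> be the set of configurations \<open>w\<close> that have a collision, a degenerate critical
  point, or two critical points with equal values; its complement lies in \<open>GL\<close>, so it suffices
  that \<open>B\<close> is negligible. Collisions lie on finitely many hyperplanes. If \<open>x\<close> is a critical
  point of \<open>f_w\<close>, then \<open>w\<^sub>k\<^sub>0\<close> is determined by \<open>x\<close> and the other \<open>w\<^sub>k\<close>, because
  \<open>\<nabla>f_w(x) = 2 \<Sum>\<^sub>k \<iota>(x - w\<^sub>k)\<close> with the inversion \<open>\<iota>(v) = v/|v|\<^sup>2\<close>, which is an involution;
  this exhibits the configurations with a degenerate critical point as critical values of a
  smooth self-map, negligible by Sard's theorem. Finally, near a configuration with two
  nondegenerate critical points \<open>x \<noteq> y\<close> these move differentiably with \<open>w\<close>, so the locus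
  \<open>f_w(x) = f_w(y)\<close> is, to first order, the hyperplane orthogonal to
  \<open>\<partial>\<^sub>w f_w(x) - \<partial>\<^sub>w f_w(y) \<noteq> 0\<close>; a set that is locally a Lipschitz graph over hyperplanes is
  negligible.\<close>

section \<open>Sard's theorem for self-maps of \<open>(\<real>\<^sup>N)\<^sup>r\<close>\<close>

text \<open>\<open>baby_Sard\<close> is stated for \<open>real^'m\<close> with a wellordered index type; \<open>'a wo\<close> is a copy of
  the finite type \<open>'a\<close> ordered through \<open>to_nat\<close>.\<close>

typedef 'a wo = "UNIV :: 'a::finite set" by auto

instance wo :: (finite) finite
proof
  have "(UNIV :: 'a wo set) = Abs_wo ` UNIV"
    by (metis Rep_wo_inverse surj_def)
  then show "finite (UNIV :: 'a wo set)"
    by (metis finite finite_imageI)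
qed

instantiation wo :: (finite) wellorder
begin

definition less_eq_wo :: "'a wo \<Rightarrow> 'a wo \<Rightarrow> bool" where
  "less_eq_wo x y \<longleftrightarrow> to_nat (Rep_wo x) \<le> to_nat (Rep_wo y)"

definition less_wo :: "'a wo \<Rightarrow> 'a wo \<Rightarrow> bool" where
  "less_wo x y \<longleftrightarrow> to_nat (Rep_wo x) < to_nat (Rep_wo y)"

instance
proof
  fix x y z :: "'a wo"
  show "(x < y) = (x \<le> y \<and> \<not> y \<le> x)" by (auto simp: less_eq_wo_def less_wo_def)
  show "x \<le> x" by (auto simp: less_eq_wo_def)
  show "x \<le> y \<Longrightarrow> y \<le> z \<Longrightarrow> x \<le> z" by (auto simp: less_eq_wo_def)
  show "x \<le> y \<Longrightarrow> y \<le> x \<Longrightarrow> x = y"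
    by (auto simp: less_eq_wo_def Rep_wo_inject[symmetric])
  show "x \<le> y \<or> y \<le> x" by (auto simp: less_eq_wo_def)
next
  fix P :: "'a wo \<Rightarrow> bool" and a
  assume step: "\<And>x. (\<And>y. y < x \<Longrightarrow> P y) \<Longrightarrow> P x"
  show "P a"
    by (induction a rule: measure_induct_rule[of "\<lambda>x. to_nat (Rep_wo x)"])
       (rule step, auto simp: less_wo_def)
qed

end

lemma card_wo: "CARD('a::finite wo) = CARD('a)"
  using type_definition.card[OF type_definition_wo] by simp

definition flatten :: "real^'n^'r \<Rightarrow> real^(('n::finite \<times> 'r::finite) wo)" where
  "flatten w = (\<chi> i. w $ snd (Rep_wo i) $ fst (Rep_wo i))"

definition unflatten :: "real^(('n::finite \<times> 'r::finite) wo) \<Rightarrow> real^'n^'r" where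
  "unflatten v = (\<chi> k j. v $ Abs_wo (j, k))"

lemma unflatten_flatten [simp]: "unflatten (flatten w) = w"
  by (simp add: flatten_def unflatten_def Abs_wo_inverse vec_eq_iff)

lemma flatten_unflatten [simp]: "flatten (unflatten v) = v"
  by (simp add: flatten_def unflatten_def Rep_wo_inverse vec_eq_iff)

lemma linear_flatten: "linear flatten"
  by (rule linearI) (auto simp: flatten_def vec_eq_iff)

lemma linear_unflatten: "linear unflatten"
  by (rule linearI) (auto simp: unflatten_def vec_eq_iff)

lemma negligible_image_singular_derivative:
  fixes f :: "real^'n^'r \<Rightarrow> real^'n^'r"
  assumes der: "\<And>x. x \<in> S \<Longrightarrow> (f has_derivative f' x) (at x)"
    and singular: "\<And>x. x \<in> S \<Longrightarrow> \<not> inj (f' x)"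
  shows "negligible (f ` S)"
proof -
  let ?g = "flatten \<circ> f \<circ> unflatten"
  let ?g' = "\<lambda>y. flatten \<circ> f' (unflatten y) \<circ> unflatten"
  have "negligible (?g ` flatten ` S)"
  proof (rule baby_Sard)
    fix y assume "y \<in> flatten ` S"
    then obtain x where x: "x \<in> S" "y = flatten x" by auto
    have "((flatten \<circ> (f \<circ> unflatten)) has_derivative (flatten \<circ> (f' x \<circ> unflatten))) (at y)"
      using x der[OF x(1)]
      by (intro diff_chain_at linear_imp_has_derivative linear_flatten linear_unflatten) simp_all
    then have "(?g has_derivative ?g' y) (at y)"
      using x by (simp add: o_assoc)
    then show "(?g has_derivative ?g' y) (at y within flatten ` S)"
      by (rule has_derivative_at_withinI)
    have "linear (?g' y)"
      using der[OF x(1)] x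
      by (auto intro!: linear_compose linear_flatten linear_unflatten dest: has_derivative_linear)
    moreover have "\<not> inj (?g' y)"
    proof
      assume "inj (?g' y)"
      then have "inj (f' x)"
        using x by (auto simp: inj_def) (metis unflatten_flatten)
      with singular x show False by auto
    qed
    ultimately have "rank (matrix (?g' y)) \<noteq> CARD(('n \<times> 'r) wo)"
      using full_rank_injective[of "matrix (?g' y)"] by simp
    then show "rank (matrix (?g' y)) < CARD(('n \<times> 'r) wo)"
      using rank_bound[of "matrix (?g' y)"] by linarith
  qed simp
  then have "negligible (unflatten ` ?g ` flatten ` S)"
    by (rule negligible_differentiable_image_negligible[rotated])
       (auto simp: card_wo intro!: linear_imp_differentiable_on linear_unflatten)
  moreover have "unflatten ` ?g ` flatten ` S = f ` S"
    by (force simp: image_comp o_def)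
  ultimately show ?thesis by simp
qed


section \<open>Sets that are locally Lipschitz graphs over hyperplanes\<close>

lemma norm_diff_projection_sq:
  fixes e v :: "'a::real_inner"
  assumes "norm e = 1"
  shows "(norm (v - (e \<bullet> v) *\<^sub>R e))\<^sup>2 = (norm v)\<^sup>2 - (e \<bullet> v)\<^sup>2"
proof -
  have "e \<bullet> e = 1" using assms by (simp add: norm_eq_sqrt_inner)
  then show ?thesis
    by (simp only: power2_norm_eq_inner)
       (simp add: inner_diff_left inner_diff_right inner_commute power2_eq_square algebra_simps)
qed

text \<open>The orthogonal projection onto \<open>e\<^sup>\<bottom>\<close> is injective on \<open>P\<close> with a 2-Lipschitz inverse, so
  \<open>P\<close> is a Lipschitz image of a subset of a hyperplane.\<close>

lemma negligible_Lipschitz_graph: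
  fixes P :: "'a::euclidean_space set"
  assumes e: "norm e = 1"
    and flat: "\<And>s s'. s \<in> P \<Longrightarrow> s' \<in> P \<Longrightarrow> \<bar>e \<bullet> (s' - s)\<bar> \<le> 3/4 * norm (s' - s)"
  shows "negligible P"
proof -
  define proj where "proj z = z - (e \<bullet> z) *\<^sub>R e" for z
  have proj_diff: "proj s' - proj s = (s' - s) - (e \<bullet> (s' - s)) *\<^sub>R e" for s s'
    by (simp add: proj_def inner_diff_right algebra_simps)
  have expand: "norm (s' - s) \<le> 2 * norm (proj s' - proj s)" if "s \<in> P" "s' \<in> P" for s s'
  proof -
    have "(e \<bullet> (s' - s))\<^sup>2 \<le> (3/4 * norm (s' - s))\<^sup>2"
      using flat[OF that] by (metis abs_ge_zero power2_abs power_mono)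
    then have "(e \<bullet> (s' - s))\<^sup>2 \<le> 9/16 * (norm (s' - s))\<^sup>2"
      by (simp add: power_mult_distrib power_divide)
    moreover have "(norm (proj s' - proj s))\<^sup>2 = (norm (s' - s))\<^sup>2 - (e \<bullet> (s' - s))\<^sup>2"
      by (simp only: proj_diff norm_diff_projection_sq[OF e])
    ultimately have "(norm (s' - s))\<^sup>2 \<le> 4 * (norm (proj s' - proj s))\<^sup>2"
      using zero_le_power2[of "norm (s' - s)"] by linarith
    also have "\<dots> = (2 * norm (proj s' - proj s))\<^sup>2"
      by (simp add: power_mult_distrib)
    finally have "(norm (s' - s))\<^sup>2 \<le> (2 * norm (proj s' - proj s))\<^sup>2" .
    then show ?thesis
      by (rule power2_le_imp_le) simp
  qed
  then have inj: "inj_on proj P"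
    by (force simp: inj_on_def)
  have "negligible (inv_into P proj ` proj ` P)"
  proof (rule negligible_locally_Lipschitz_image)
    have "negligible {z. e \<bullet> z = 0}"
      using e by (intro negligible_hyperplane) auto
    moreover have "proj ` P \<subseteq> {z. e \<bullet> z = 0}"
      using e by (auto simp: proj_def inner_diff_right norm_eq_sqrt_inner)
    ultimately show "negligible (proj ` P)"
      by (rule negligible_subset)
  next
    fix z assume "z \<in> proj ` P"
    then show "\<exists>T B. open T \<and> z \<in> T \<and>
        (\<forall>y\<in>proj ` P \<inter> T. norm (inv_into P proj y - inv_into P proj z) \<le> B * norm (y - z))"
      using expand inj by (intro exI[of _ UNIV] exI[of _ 2]) auto
  qed simp
  then show ?thesis
    using inj by simp
qed

lemma negligible_fst_image_uniform_cone_piece: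
  fixes T :: "('a::euclidean_space \<times> 'b::real_normed_vector) set"
  assumes cone: "\<And>t t'. t \<in> T \<Longrightarrow> t' \<in> T \<Longrightarrow> dist t' t < \<delta> t \<Longrightarrow>
        \<bar>\<nu> t \<bullet> (fst t' - fst t)\<bar> \<le> norm (fst t' - fst t) / 2"
    and unit: "\<And>t. t \<in> T \<Longrightarrow> norm (\<nu> t) = 1"
    and near_u: "\<And>t. t \<in> T \<Longrightarrow> norm (\<nu> t - u) < 1/8"
    and small: "\<And>t t'. t \<in> T \<Longrightarrow> t' \<in> T \<Longrightarrow> dist t' t < \<delta> t"
  shows "negligible (fst ` T)"
proof (cases "T = {}")
  case False
  then obtain t0 where "t0 \<in> T" by auto
  then have u_large: "norm u \<ge> 7/8"
    using unit[of t0] near_u[of t0] norm_triangle_ineq2[of "\<nu> t0" u]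
    by (simp add: norm_minus_commute)
  then have "norm u > 0"
    by linarith
  show ?thesis
  proof (rule negligible_Lipschitz_graph)
    show "norm (u /\<^sub>R norm u) = 1"
      using \<open>norm u > 0\<close> by simp
    fix s s' assume "s \<in> fst ` T" "s' \<in> fst ` T"
    then obtain t t' where t: "t \<in> T" "s = fst t" and t': "t' \<in> T" "s' = fst t'"
      by auto
    have "\<bar>(u - \<nu> t) \<bullet> (s' - s)\<bar> \<le> norm (u - \<nu> t) * norm (s' - s)"
      by (rule Cauchy_Schwarz_ineq2)
    also have "\<dots> \<le> 1/8 * norm (s' - s)"
      using near_u[OF t(1)] by (intro mult_right_mono) (auto simp: norm_minus_commute)
    finally have "\<bar>(u - \<nu> t) \<bullet> (s' - s)\<bar> \<le> 1/8 * norm (s' - s)" .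
    moreover have "\<bar>\<nu> t \<bullet> (s' - s)\<bar> \<le> norm (s' - s) / 2"
      using cone[OF t(1) t'(1) small[OF t(1) t'(1)]] t t' by simp
    moreover have "u \<bullet> (s' - s) = \<nu> t \<bullet> (s' - s) + (u - \<nu> t) \<bullet> (s' - s)"
      by (simp add: inner_diff_left)
    ultimately have "\<bar>u \<bullet> (s' - s)\<bar> \<le> 5/8 * norm (s' - s)"
      by linarith
    have "\<bar>(u /\<^sub>R norm u) \<bullet> (s' - s)\<bar> = \<bar>u \<bullet> (s' - s)\<bar> / norm u"
      using \<open>norm u > 0\<close> by (simp add: abs_mult divide_inverse mult.commute)
    also have "\<dots> \<le> (5/8 * norm (s' - s)) / (7/8)"
      using \<open>\<bar>u \<bullet> (s' - s)\<bar> \<le> 5/8 * norm (s' - s)\<close> u_large by (intro frac_le) auto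
    also have "\<dots> \<le> 3/4 * norm (s' - s)"
      by simp
    finally show "\<bar>(u /\<^sub>R norm u) \<bullet> (s' - s)\<bar> \<le> 3/4 * norm (s' - s)" .
  qed
qed simp

lemma negligible_fst_image_locally_cone:
  fixes T :: "('a::euclidean_space \<times> 'b::euclidean_space) set"
  assumes "\<And>t. t \<in> T \<Longrightarrow> \<exists>\<nu> \<delta>. norm \<nu> = 1 \<and> \<delta> > 0 \<and>
       (\<forall>t'\<in>T. dist t' t < \<delta> \<longrightarrow> \<bar>\<nu> \<bullet> (fst t' - fst t)\<bar> \<le> norm (fst t' - fst t) / 2)"
  shows "negligible (fst ` T)"
proof -
  obtain \<nu> \<delta> where \<nu>\<delta>: "\<And>t. t \<in> T \<Longrightarrow> norm (\<nu> t) = 1 \<and> \<delta> t > 0 \<and>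
       (\<forall>t'\<in>T. dist t' t < \<delta> t \<longrightarrow> \<bar>\<nu> t \<bullet> (fst t' - fst t)\<bar> \<le> norm (fst t' - fst t) / 2)"
    using assms by metis
  obtain D\<^sub>a :: "'a set" where D\<^sub>a: "countable D\<^sub>a" "\<And>X. open X \<Longrightarrow> X \<noteq> {} \<Longrightarrow> \<exists>d\<in>D\<^sub>a. d \<in> X"
    using countable_dense_exists by blast
  obtain D :: "('a \<times> 'b) set" where D: "countable D" "\<And>X. open X \<Longrightarrow> X \<noteq> {} \<Longrightarrow> \<exists>d\<in>D. d \<in> X"
    using countable_dense_exists by blast
  define piece where "piece u m c = {t\<in>T. norm (\<nu> t - u) < 1/8 \<and> 1 / real (Suc m) < \<delta> t
      \<and> dist t c < 1 / (2 * real (Suc m))}" for u m c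
  have negligible_piece: "negligible (fst ` piece u m c)" for u m c
  proof (rule negligible_fst_image_uniform_cone_piece[where \<nu> = \<nu> and \<delta> = \<delta> and u = u])
    fix t t' assume t: "t \<in> piece u m c" and t': "t' \<in> piece u m c"
    have "dist t' t \<le> dist t' c + dist t c"
      by (rule dist_triangle2)
    also have "\<dots> < 1 / (2 * real (Suc m)) + 1 / (2 * real (Suc m))"
      using t t' by (intro add_strict_mono) (auto simp: piece_def)
    also have "\<dots> = 1 / real (Suc m)"
      by (simp add: field_simps)
    also have "\<dots> < \<delta> t"
      using t by (simp add: piece_def)
    finally show "dist t' t < \<delta> t" .
  next
    fix t t' assume "t \<in> piece u m c" "t' \<in> piece u m c" "dist t' t < \<delta> t"
    then show "\<bar>\<nu> t \<bullet> (fst t' - fst t)\<bar> \<le> norm (fst t' - fst t) / 2"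
      using \<nu>\<delta>[of t] unfolding piece_def by blast
  next
    fix t assume "t \<in> piece u m c"
    then show "norm (\<nu> t) = 1" and "norm (\<nu> t - u) < 1/8"
      using \<nu>\<delta>[of t] unfolding piece_def by blast+
  qed
  have "countable ((\<lambda>(u, m, c). fst ` piece u m c) ` (D\<^sub>a \<times> UNIV \<times> D))"
    using D\<^sub>a(1) D(1) by (intro countable_image countable_SIGMA) auto
  then have negligible_union:
    "negligible (\<Union>((\<lambda>(u, m, c). fst ` piece u m c) ` (D\<^sub>a \<times> UNIV \<times> D)))"
    using negligible_piece by (intro negligible_countable_Union) auto
  have "T \<subseteq> (\<Union>(u, m, c) \<in> D\<^sub>a \<times> UNIV \<times> D. piece u m c)"
  proof
    fix t assume t: "t \<in> T"
    obtain u where u: "u \<in> D\<^sub>a" "u \<in> ball (\<nu> t) (1/8)"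
      using D\<^sub>a(2)[of "ball (\<nu> t) (1/8)"] by auto
    have "\<delta> t > 0"
      using \<nu>\<delta>[OF t] by blast
    then obtain m where m: "inverse (real (Suc m)) < \<delta> t"
      using reals_Archimedean by blast
    obtain c where c: "c \<in> D" "c \<in> ball t (1 / (2 * real (Suc m)))"
      using D(2)[of "ball t (1 / (2 * real (Suc m)))"] by auto
    have "t \<in> piece u m c"
      using t u m c by (simp add: piece_def dist_norm norm_minus_commute inverse_eq_divide)
    then show "t \<in> (\<Union>(u, m, c) \<in> D\<^sub>a \<times> UNIV \<times> D. piece u m c)"
      using u c by blast
  qed
  then have "fst ` T \<subseteq> fst ` (\<Union>(u, m, c) \<in> D\<^sub>a \<times> UNIV \<times> D. piece u m c)"
    by (rule image_mono)
  also have "\<dots> = \<Union>((\<lambda>(u, m, c). fst ` piece u m c) ` (D\<^sub>a \<times> UNIV \<times> D))"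
    by (simp add: image_UN split_def)
  finally show ?thesis
    using negligible_union negligible_subset by blast
qed

section \<open>The inversion \<open>v \<mapsto> v / |v|\<^sup>2\<close>\<close>

definition inversion :: "'a::real_inner \<Rightarrow> 'a" where
  "inversion v = inverse (v \<bullet> v) *\<^sub>R v"

definition inversion_derivative :: "'a::real_inner \<Rightarrow> 'a \<Rightarrow> 'a" where
  "inversion_derivative u h = inverse (u \<bullet> u) *\<^sub>R h - (2 * (u \<bullet> h) / (u \<bullet> u)\<^sup>2) *\<^sub>R u"

lemma has_derivative_inversion:
  fixes u :: "'a::real_inner"
  assumes "u \<noteq> 0"
  shows "(inversion has_derivative inversion_derivative u) (at u)"
proof -
  have "((\<lambda>x. x \<bullet> x) has_derivative (\<lambda>h. u \<bullet> h + h \<bullet> u)) (at u)"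
    by (rule has_derivative_inner[OF has_derivative_ident has_derivative_ident])
  then have "((\<lambda>x. inverse (x \<bullet> x)) has_derivative
      (\<lambda>h. - (inverse (u \<bullet> u) * (u \<bullet> h + h \<bullet> u) * inverse (u \<bullet> u)))) (at u)"
    using assms by (intro Deriv.has_derivative_inverse) auto
  from has_derivative_scaleR[OF this has_derivative_ident] show ?thesis
    unfolding inversion_def [abs_def]
    by (rule has_derivative_eq_rhs)
       (simp add: fun_eq_iff inversion_derivative_def field_simps inner_commute power2_eq_square
          scaleR_diff_right)
qed

lemma inversion_minus: "inversion (- v) = - inversion v"
  by (simp add: inversion_def)

lemma inversion_eq_0_iff [simp]: "inversion v = 0 \<longleftrightarrow> v = 0"
  by (simp add: inversion_def)

lemma inversion_inversion [simp]: "inversion (inversion v) = v"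
  by (cases "v = 0") (simp_all add: inversion_def field_simps power2_eq_square)

lemma inj_inversion: "inj inversion"
  by (metis inversion_inversion injI)

lemma linear_inversion_derivative: "linear (inversion_derivative u)"
  by (rule linearI) (auto simp: inversion_derivative_def inner_add_right algebra_simps add_divide_distrib)

lemma inversion_derivative_minus_point: "inversion_derivative (- u) = inversion_derivative u"
  by (simp add: fun_eq_iff inversion_derivative_def)

lemma inversion_derivative_minus: "inversion_derivative u (- v) = - inversion_derivative u v"
  by (simp add: inversion_derivative_def)

text \<open>The chain rule applied to \<open>inversion \<circ> inversion = id\<close>.\<close>

lemma inversion_derivative_inversion:
  fixes u :: "'a::real_inner"
  assumes "u \<noteq> 0"
  shows "inversion_derivative u (inversion_derivative (inversion u) v) = v"
proof -
  define c where "c = u \<bullet> u"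
  have c: "c \<noteq> 0" using assms by (simp add: c_def)
  have inv_u: "inversion u = inverse c *\<^sub>R u"
    by (simp add: inversion_def c_def)
  have "inversion u \<bullet> inversion u = inverse c"
    using c by (simp add: inv_u c_def[symmetric] field_simps)
  moreover have "inversion u \<bullet> v = inverse c * (u \<bullet> v)"
    by (simp add: inv_u)
  ultimately have eq: "inversion_derivative (inversion u) v = c *\<^sub>R v - (2 * (u \<bullet> v)) *\<^sub>R u"
    unfolding inversion_derivative_def using c by (simp add: inv_u field_simps power2_eq_square)
  have inner_u: "u \<bullet> (c *\<^sub>R v - (2 * (u \<bullet> v)) *\<^sub>R u) = - c * (u \<bullet> v)"
    by (simp add: inner_diff_right c_def[symmetric] algebra_simps)
  have "inversion_derivative u (c *\<^sub>R v - (2 * (u \<bullet> v)) *\<^sub>R u) = v"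
    unfolding inversion_derivative_def inner_u c_def[symmetric] using c
    by (simp add: algebra_simps power2_eq_square) (simp add: field_simps)
  then show ?thesis
    by (simp only: eq)
qed

section \<open>Derivatives of \<open>f_w\<close> in \<open>x\<close> and in \<open>w\<close>\<close>

definition grad_f :: "real^'n^'r \<Rightarrow> real^'n \<Rightarrow> real^'n" where
  "grad_f w x = (\<Sum>k\<in>UNIV. 2 *\<^sub>R inversion (x - w $ k))"

definition hess_f :: "real^'n^'r \<Rightarrow> real^'n \<Rightarrow> real^'n \<Rightarrow> real^'n" where
  "hess_f w x h = (\<Sum>k\<in>UNIV. 2 *\<^sub>R inversion_derivative (x - w $ k) h)"

definition grad_w_f :: "real^'n^'r \<Rightarrow> real^'n \<Rightarrow> real^'n^'r" where
  "grad_w_f w x = (\<chi> k. (-2) *\<^sub>R inversion (x - w $ k))"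

lemma has_derivative_diff_point:
  "((\<lambda>z::(real^'n^'r) \<times> (real^'n). snd z - fst z $ k) has_derivative (\<lambda>h. snd h - fst h $ k)) F"
proof -
  have "linear (\<lambda>z::(real^'n^'r) \<times> (real^'n). snd z - fst z $ k)"
    by (rule linearI) (auto simp: algebra_simps)
  then show ?thesis
    by (rule linear_imp_has_derivative)
qed

lemma has_derivative_ln_norm_sq_diff:
  fixes w :: "real^'n^'r" and x :: "real^'n"
  assumes "x \<noteq> w $ k"
  shows "((\<lambda>z::(real^'n^'r) \<times> (real^'n). ln ((norm (snd z - fst z $ k))\<^sup>2)) has_derivative
      (\<lambda>h. (2 *\<^sub>R inversion (x - w $ k)) \<bullet> (snd h - fst h $ k))) (at (w, x))"
proof -
  let ?v = "\<lambda>z::(real^'n^'r) \<times> (real^'n). snd z - fst z $ k"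
  have "DERIV ln (?v (w, x) \<bullet> ?v (w, x)) :> inverse (?v (w, x) \<bullet> ?v (w, x))"
    using assms by (intro DERIV_ln) simp
  note chain = DERIV_compose_FDERIV[OF this
      has_derivative_inner[OF has_derivative_diff_point has_derivative_diff_point]]
  have "((\<lambda>z. ln (?v z \<bullet> ?v z)) has_derivative
      (\<lambda>h. (2 *\<^sub>R inversion (x - w $ k)) \<bullet> (snd h - fst h $ k))) (at (w, x))"
    by (rule has_derivative_eq_rhs[OF chain]) (simp add: fun_eq_iff inversion_def inner_commute)
  then show ?thesis
    by (simp add: power2_norm_eq_inner)
qed

lemma has_derivative_f_w_joint:
  fixes w :: "real^'n^'r" and x :: "real^'n"
  assumes "\<And>k. x \<noteq> w $ k"
  shows "((\<lambda>z::(real^'n^'r) \<times> (real^'n). f_w (fst z) (snd z)) has_derivative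
      (\<lambda>h. grad_f w x \<bullet> snd h + grad_w_f w x \<bullet> fst h)) (at (w, x))"
proof -
  have "grad_w_f w x \<bullet> hw = (\<Sum>k\<in>UNIV. ((-2) *\<^sub>R inversion (x - w $ k)) \<bullet> hw $ k)" for hw
    unfolding grad_w_f_def by (subst inner_vec_def) simp
  then have "(\<lambda>h. \<Sum>k\<in>UNIV. (2 *\<^sub>R inversion (x - w $ k)) \<bullet> (snd h - fst h $ k))
      = (\<lambda>h::(real^'n^'r) \<times> (real^'n). grad_f w x \<bullet> snd h + grad_w_f w x \<bullet> fst h)"
    by (simp add: fun_eq_iff grad_f_def inner_sum_left inner_diff_right sum_subtractf sum_negf)
  moreover have "((\<lambda>z::(real^'n^'r) \<times> (real^'n). \<Sum>k\<in>UNIV. ln ((norm (snd z - fst z $ k))\<^sup>2))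
      has_derivative (\<lambda>h. \<Sum>k\<in>UNIV. (2 *\<^sub>R inversion (x - w $ k)) \<bullet> (snd h - fst h $ k)))
      (at (w, x))"
    by (rule has_derivative_sum) (rule has_derivative_ln_norm_sq_diff[OF assms])
  ultimately show ?thesis
    by (simp add: f_w_def[abs_def])
qed

lemma has_derivative_grad_f_joint:
  fixes w :: "real^'n^'r" and x :: "real^'n"
  assumes "\<And>k. x \<noteq> w $ k"
  shows "((\<lambda>z::(real^'n^'r) \<times> (real^'n). grad_f (fst z) (snd z)) has_derivative
      (\<lambda>h. \<Sum>k\<in>UNIV. 2 *\<^sub>R inversion_derivative (x - w $ k) (snd h - fst h $ k))) (at (w, x))"
  unfolding grad_f_def
proof (intro has_derivative_sum has_derivative_scaleR_right)
  fix k
  have "(inversion has_derivative inversion_derivative (x - w $ k))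
      (at ((\<lambda>z::(real^'n^'r) \<times> (real^'n). snd z - fst z $ k) (w, x)))"
    using assms by (simp add: has_derivative_inversion)
  from has_derivative_compose[OF has_derivative_diff_point this]
  show "((\<lambda>z. inversion (snd z - fst z $ k)) has_derivative
      (\<lambda>h. inversion_derivative (x - w $ k) (snd h - fst h $ k))) (at (w, x))" .
qed

lemma has_derivative_Pair_right:
  "((\<lambda>y. (w, y)) has_derivative (\<lambda>h. (0, h))) (at x)"
  by (intro derivative_eq_intros) auto

lemma has_derivative_f_w:
  fixes w :: "real^'n^'r" and x :: "real^'n"
  assumes "\<And>k. x \<noteq> w $ k"
  shows "(f_w w has_derivative (\<lambda>h. grad_f w x \<bullet> h)) (at x)"
  using has_derivative_compose[OF has_derivative_Pair_right has_derivative_f_w_joint[OF assms]]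
  by simp

lemma has_derivative_grad_f:
  fixes w :: "real^'n^'r" and x :: "real^'n"
  assumes "\<And>k. x \<noteq> w $ k"
  shows "(grad_f w has_derivative hess_f w x) (at x)"
  using has_derivative_compose[OF has_derivative_Pair_right has_derivative_grad_f_joint[OF assms]]
  by (simp add: hess_f_def[abs_def])

lemma grad_f_w_eq:
  fixes w :: "real^'n^'r"
  assumes "\<And>k. x \<noteq> w $ k"
  shows "grad (f_w w) x = grad_f w x"
  by (simp add: grad_def vec_eq_iff inner_axis flip: frechet_derivative_at[OF has_derivative_f_w[OF assms]])

lemma has_derivative_grad_f_w:
  fixes w :: "real^'n^'r"
  assumes "\<And>k. x \<noteq> w $ k"
  shows "(grad (f_w w) has_derivative hess_f w x) (at x)"
proof (rule has_derivative_transform_within_open[OF has_derivative_grad_f[OF assms]])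
  show "open (- range (($) w))"
    by (simp add: open_Compl finite_imp_closed)
  show "x \<in> - range (($) w)"
    using assms by auto
qed (auto intro: grad_f_w_eq[symmetric])

section \<open>First-order behaviour of a function along a zero set\<close>

text \<open>The Lipschitz estimate of the implicit function theorem, without its existence part.\<close>

lemma zero_set_Lipschitz_in_first:
  fixes G :: "'a::real_normed_vector \<times> 'b::real_normed_vector \<Rightarrow> 'c::euclidean_space"
  assumes dG: "(G has_derivative DG) (at (w, x))"
    and inj: "inj (\<lambda>h. DG (0, h))"
    and zero: "G (w, x) = 0"
  obtains \<delta> C where "\<delta> > 0" "C \<ge> 0"
    "\<And>w' x'. norm ((w', x') - (w, x)) < \<delta> \<Longrightarrow> G (w', x') = 0 \<Longrightarrow> norm (x' - x) \<le> C * norm (w' - w)"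
proof -
  have lin: "linear DG"
    using dG by (simp add: has_derivative_linear)
  then have "linear (\<lambda>h. DG (0, h))"
    by (auto intro!: linearI simp: linear_add[OF lin, symmetric] linear_scale[OF lin, symmetric])
  then obtain c where c: "c > 0" "\<And>h. c * norm h \<le> norm (DG (0, h))"
    using linear_inj_bounded_below_pos[OF _ inj] by blast
  have "bounded_linear (\<lambda>h. DG (h, 0))"
    using has_derivative_bounded_linear[OF dG]
    by (rule bounded_linear_compose) (intro bounded_linear_Pair bounded_linear_ident bounded_linear_zero)
  then obtain K where K: "K > 0" "\<And>h. norm (DG (h, 0)) \<le> norm h * K"
    using bounded_linear.pos_bounded by blast
  obtain \<delta> where \<delta>: "\<delta> > 0"
    "\<And>z. norm (z - (w, x)) < \<delta> \<Longrightarrow> norm (G z - G (w, x) - DG (z - (w, x))) \<le> c/2 * norm (z - (w, x))"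
    using dG c(1) unfolding has_derivative_at_alt by (metis half_gt_zero)
  show ?thesis
  proof
    show "\<delta> > 0" "(c + 2 * K) / c \<ge> 0"
      using \<delta> c K by simp_all
    fix w' x' assume near: "norm ((w', x') - (w, x)) < \<delta>" and "G (w', x') = 0"
    define a b where "a = w' - w" and "b = x' - x"
    have "norm (DG (a, b)) \<le> c/2 * norm (a, b)"
      using \<delta>(2)[OF near] \<open>G (w', x') = 0\<close> zero by (simp add: a_def b_def)
    also have "\<dots> \<le> c/2 * (norm a + norm b)"
      using c(1) by (intro mult_left_mono norm_Pair_le) auto
    finally have DG_small: "norm (DG (a, b)) \<le> c/2 * (norm a + norm b)" .
    have "DG (0, b) = DG (a, b) - DG (a, 0)"
      using linear_add[OF lin, of "(a, 0)" "(0, b)"] by simp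
    then have "c * norm b \<le> norm (DG (a, b)) + norm (DG (a, 0))"
      using c(2)[of b] norm_triangle_ineq4[of "DG (a, b)" "DG (a, 0)"] by simp
    then have "c/2 * norm b \<le> (c/2 + K) * norm a"
      using DG_small K(2)[of a] by (simp add: algebra_simps)
    then show "norm (x' - x) \<le> (c + 2 * K) / c * norm (w' - w)"
      using c(1) by (simp add: a_def b_def field_simps)
  qed
qed

lemma first_order_along_zero_set:
  fixes F :: "'a::real_normed_vector \<times> 'b::real_normed_vector \<Rightarrow> real"
    and G :: "'a \<times> 'b \<Rightarrow> 'c::euclidean_space"
  assumes dF: "(F has_derivative (\<lambda>h. D (fst h))) (at (w, x))"
    and dG: "(G has_derivative DG) (at (w, x))"
    and inj: "inj (\<lambda>h. DG (0, h))"
    and zero: "G (w, x) = 0"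
    and \<epsilon>: "\<epsilon> > 0"
  obtains \<delta> where "\<delta> > 0" "\<And>w' x'. norm ((w', x') - (w, x)) < \<delta> \<Longrightarrow> G (w', x') = 0 \<Longrightarrow>
      \<bar>F (w', x') - F (w, x) - D (w' - w)\<bar> \<le> \<epsilon> * norm (w' - w)"
proof -
  obtain \<delta>\<^sub>1 C where \<delta>\<^sub>1: "\<delta>\<^sub>1 > 0" "C \<ge> 0"
    "\<And>w' x'. norm ((w', x') - (w, x)) < \<delta>\<^sub>1 \<Longrightarrow> G (w', x') = 0 \<Longrightarrow> norm (x' - x) \<le> C * norm (w' - w)"
    using zero_set_Lipschitz_in_first[OF dG inj zero] by blast
  have "\<epsilon> / (1 + C) > 0"
    using \<epsilon> \<delta>\<^sub>1(2) by simp
  then obtain \<delta>\<^sub>2 where \<delta>\<^sub>2: "\<delta>\<^sub>2 > 0" "\<And>z. norm (z - (w, x)) < \<delta>\<^sub>2 \<Longrightarrow>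
      norm (F z - F (w, x) - D (fst (z - (w, x)))) \<le> \<epsilon> / (1 + C) * norm (z - (w, x))"
    using dF unfolding has_derivative_at_alt by metis
  show ?thesis
  proof
    show "min \<delta>\<^sub>1 \<delta>\<^sub>2 > 0"
      using \<delta>\<^sub>1 \<delta>\<^sub>2 by simp
    fix w' x' assume near: "norm ((w', x') - (w, x)) < min \<delta>\<^sub>1 \<delta>\<^sub>2" and "G (w', x') = 0"
    then have x'_near: "norm (x' - x) \<le> C * norm (w' - w)"
      using \<delta>\<^sub>1(3) by simp
    have "\<bar>F (w', x') - F (w, x) - D (w' - w)\<bar> \<le> \<epsilon> / (1 + C) * norm (w' - w, x' - x)"
      using \<delta>\<^sub>2(2)[of "(w', x')"] near by simp
    also have "\<dots> \<le> \<epsilon> / (1 + C) * (norm (w' - w) + norm (x' - x))"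
      using \<open>\<epsilon> / (1 + C) > 0\<close> by (intro mult_left_mono norm_Pair_le) auto
    also have "\<dots> \<le> \<epsilon> / (1 + C) * ((1 + C) * norm (w' - w))"
      using x'_near \<open>\<epsilon> / (1 + C) > 0\<close> by (intro mult_left_mono) (auto simp: algebra_simps)
    also have "\<dots> = \<epsilon> * norm (w' - w)"
      using \<delta>\<^sub>1(2) by simp
    finally show "\<bar>F (w', x') - F (w, x) - D (w' - w)\<bar> \<le> \<epsilon> * norm (w' - w)" .
  qed
qed

section \<open>The exceptional configurations\<close>

definition collision_set :: "(real^'n^'r) set" where
  "collision_set = {w. \<not> inj (($) w)}"

definition degenerate_set :: "(real^'n^'r) set" where
  "degenerate_set = {w. \<exists>x. (\<forall>k. x \<noteq> w $ k) \<and> grad_f w x = 0 \<and> \<not> inj (hess_f w x)}"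

definition equal_values_set :: "(real^'n^'r) set" where
  "equal_values_set = {w. \<exists>x y. (\<forall>k. x \<noteq> w $ k) \<and> (\<forall>k. y \<noteq> w $ k) \<and> x \<noteq> y \<and>
     grad_f w x = 0 \<and> grad_f w y = 0 \<and> inj (hess_f w x) \<and> inj (hess_f w y) \<and> f_w w x = f_w w y}"

lemma Compl_GL_subset:
  "- GL \<subseteq> collision_set \<union> degenerate_set \<union> (equal_values_set :: (real^'n^'r) set)"
proof
  fix w :: "real^'n^'r"
  assume "w \<in> - GL"
  show "w \<in> collision_set \<union> degenerate_set \<union> equal_values_set"
  proof (rule ccontr)
    assume "w \<notin> collision_set \<union> degenerate_set \<union> equal_values_set"
    then have inj_w: "inj (($) w)" and nondeg: "w \<notin> degenerate_set" and distinct: "w \<notin> equal_values_set"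
      by (auto simp: collision_set_def)
    define U where "U = - range (($) w)"
    have U: "x \<in> U \<longleftrightarrow> (\<forall>k. x \<noteq> w $ k)" for x
      by (auto simp: U_def)
    have crit: "grad (f_w w) x = 0 \<longleftrightarrow> grad_f w x = 0" if "x \<in> U" for x
      using grad_f_w_eq[of x w] that U by auto
    have "morse_on (f_w w) U"
      unfolding morse_on_def
    proof (intro conjI ballI impI)
      show "open U"
        by (simp add: U_def open_Compl finite_imp_closed)
      show "f_w w differentiable at x" if "x \<in> U" for x
        using has_derivative_f_w that U by (auto simp: differentiable_def)
      show "\<exists>H. (grad (f_w w) has_derivative H) (at x) \<and> inj H"
        if "x \<in> U" "grad (f_w w) x = 0" for x
        using has_derivative_grad_f_w[of x w] nondeg that U crit by (auto simp: degenerate_set_def)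
    qed
    moreover have "f_w w x \<noteq> f_w w y"
      if "x \<in> U" "y \<in> U" "grad (f_w w) x = 0 \<and> grad (f_w w) y = 0 \<and> x \<noteq> y" for x y
      using that nondeg distinct U crit
      unfolding degenerate_set_def equal_values_set_def by blast
    ultimately have "w \<in> GL"
      using inj_w by (simp add: GL_def global_morse_on_def U_def Compl_eq_Diff_UNIV)
    with \<open>w \<in> - GL\<close> show False
      by simp
  qed
qed

lemma negligible_collision_set: "negligible (collision_set :: (real^'n^'r) set)"
proof -
  obtain i :: 'n where True by blast
  define a where "a k l = (axis k (axis i 1) - axis l (axis i 1) :: real^'n^'r)" for k l
  have "collision_set \<subseteq> (\<Union>(k, l) \<in> {(k, l). k \<noteq> l}. {w. a k l \<bullet> w = 0})"
  proof
    fix w :: "real^'n^'r" assume "w \<in> collision_set"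
    then obtain k l where "k \<noteq> l" "w $ k = w $ l"
      by (auto simp: collision_set_def inj_def)
    moreover from \<open>w $ k = w $ l\<close> have "a k l \<bullet> w = 0"
      by (simp add: a_def inner_diff_left inner_axis')
    ultimately show "w \<in> (\<Union>(k, l) \<in> {(k, l). k \<noteq> l}. {w. a k l \<bullet> w = 0})"
      by blast
  qed
  moreover have "negligible (\<Union>(k, l) \<in> {(k, l). k \<noteq> l}. {w. a k l \<bullet> w = 0})"
  proof (rule negligible_Union)
    fix T assume "T \<in> (\<lambda>(k, l). {w. a k l \<bullet> w = 0}) ` {(k, l). k \<noteq> l}"
    then obtain k l where "k \<noteq> l" "T = {w. a k l \<bullet> w = 0}"
      by auto
    moreover from \<open>k \<noteq> l\<close> have "a k l $ k $ i = 1"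
      by (simp add: a_def axis_def)
    then have "a k l \<noteq> 0"
      by auto
    ultimately show "negligible T"
      by (auto simp: negligible_hyperplane)
  qed simp
  ultimately show ?thesis
    by (rule negligible_subset[rotated])
qed

definition partial_field :: "'r \<Rightarrow> real^'n^'r \<Rightarrow> real^'n" where
  "partial_field k\<^sub>0 p = (\<Sum>k\<in>UNIV - {k\<^sub>0}. inversion (p $ k\<^sub>0 - p $ k))"

definition partial_field_derivative :: "'r \<Rightarrow> real^'n^'r \<Rightarrow> real^'n^'r \<Rightarrow> real^'n" where
  "partial_field_derivative k\<^sub>0 p h =
     (\<Sum>k\<in>UNIV - {k\<^sub>0}. inversion_derivative (p $ k\<^sub>0 - p $ k) (h $ k\<^sub>0 - h $ k))"

text \<open>For a critical point \<open>x\<close> of \<open>f_w\<close>, \<open>\<iota>(x - w\<^sub>k\<^sub>0) = -\<Sum>\<^sub>k\<^sub>\<noteq>\<^sub>k\<^sub>0 \<iota>(x - w\<^sub>k)\<close>, so \<open>w\<close> is recovered from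
  the configuration \<open>p\<close> in which \<open>w\<^sub>k\<^sub>0\<close> is replaced by \<open>x\<close> as \<open>recover k\<^sub>0 p\<close>; a null vector \<open>v\<close>
  of the Hessian at \<open>x\<close> gives the null vector \<open>axis k\<^sub>0 v\<close> of the derivative of \<open>recover k\<^sub>0\<close> at \<open>p\<close>.\<close>

definition recover :: "'r \<Rightarrow> real^'n^'r \<Rightarrow> real^'n^'r" where
  "recover k\<^sub>0 p = p + axis k\<^sub>0 (inversion (partial_field k\<^sub>0 p))"

definition recover_derivative :: "'r \<Rightarrow> real^'n^'r \<Rightarrow> real^'n^'r \<Rightarrow> real^'n^'r" where
  "recover_derivative k\<^sub>0 p h =
     h + axis k\<^sub>0 (inversion_derivative (partial_field k\<^sub>0 p) (partial_field_derivative k\<^sub>0 p h))"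

lemma linear_axis: "linear (axis k :: 'a::real_vector \<Rightarrow> 'a^'r)"
  by (rule linearI) (auto simp: vec_eq_iff axis_def)

lemma has_derivative_recover:
  fixes p :: "real^'n^'r"
  assumes "\<And>k. k \<noteq> k\<^sub>0 \<Longrightarrow> p $ k\<^sub>0 \<noteq> p $ k" and "partial_field k\<^sub>0 p \<noteq> 0"
  shows "(recover k\<^sub>0 has_derivative recover_derivative k\<^sub>0 p) (at p)"
proof -
  have "((\<lambda>p::real^'n^'r. inversion (p $ k\<^sub>0 - p $ k)) has_derivative
      (\<lambda>h. inversion_derivative (p $ k\<^sub>0 - p $ k) (h $ k\<^sub>0 - h $ k))) (at p)"
    if "k \<in> UNIV - {k\<^sub>0}" for k
  proof -
    have "linear (\<lambda>q::real^'n^'r. q $ k\<^sub>0 - q $ k)"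
      by (rule linearI) (auto simp: algebra_simps)
    moreover have "(inversion has_derivative inversion_derivative (p $ k\<^sub>0 - p $ k)) (at (p $ k\<^sub>0 - p $ k))"
      using assms(1) that by (simp add: has_derivative_inversion)
    ultimately show ?thesis
      using has_derivative_compose[OF linear_imp_has_derivative] by blast
  qed
  then have "(partial_field k\<^sub>0 has_derivative partial_field_derivative k\<^sub>0 p) (at p)"
    unfolding partial_field_def[abs_def] partial_field_derivative_def[abs_def]
    by (rule has_derivative_sum)
  from has_derivative_compose[OF has_derivative_compose[OF this has_derivative_inversion[OF assms(2)]]
      linear_imp_has_derivative[OF linear_axis]]
  have "((\<lambda>p. axis k\<^sub>0 (inversion (partial_field k\<^sub>0 p))) has_derivative
      (\<lambda>h. axis k\<^sub>0 (inversion_derivative (partial_field k\<^sub>0 p) (partial_field_derivative k\<^sub>0 p h))))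
      (at p)" .
  from has_derivative_add[OF has_derivative_ident this] show ?thesis
    unfolding recover_def[abs_def] recover_derivative_def[abs_def] .
qed

lemma linear_hess_f: "linear (hess_f w x)"
  by (rule linearI)
     (simp_all add: hess_f_def linear_add[OF linear_inversion_derivative]
        linear_scale[OF linear_inversion_derivative] scaleR_add_right sum.distrib scaleR_sum_right
        scaleR_left_commute mult.commute)

lemma degenerate_set_subset_critical_values:
  "(degenerate_set :: (real^'n^'r) set) \<subseteq> recover k\<^sub>0 `
     {p. (\<forall>k. k \<noteq> k\<^sub>0 \<longrightarrow> p $ k\<^sub>0 \<noteq> p $ k) \<and> partial_field k\<^sub>0 p \<noteq> 0 \<and> \<not> inj (recover_derivative k\<^sub>0 p)}"
proof
  fix w :: "real^'n^'r" assume "w \<in> degenerate_set"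
  then obtain x where x: "\<forall>k. x \<noteq> w $ k" and crit: "grad_f w x = 0" and "\<not> inj (hess_f w x)"
    by (auto simp: degenerate_set_def)
  then obtain v where v: "v \<noteq> 0" "hess_f w x v = 0"
    using linear_injective_0[OF linear_hess_f] by blast
  define p where "p = (\<chi> k. if k = k\<^sub>0 then x else w $ k)"
  have p_k\<^sub>0: "p $ k\<^sub>0 = x" and p_k: "\<And>k. k \<noteq> k\<^sub>0 \<Longrightarrow> p $ k = w $ k"
    by (simp_all add: p_def)
  have "partial_field k\<^sub>0 p = (\<Sum>k\<in>UNIV - {k\<^sub>0}. inversion (x - w $ k))"
    unfolding partial_field_def p_k\<^sub>0 by (rule sum.cong) (auto simp: p_k)
  also have "\<dots> = - inversion (x - w $ k\<^sub>0)"
    using crit by (simp add: grad_f_def sum.remove[of UNIV k\<^sub>0] scaleR_sum_right[symmetric]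
        eq_neg_iff_add_eq_0 add.commute)
  finally have field: "partial_field k\<^sub>0 p = - inversion (x - w $ k\<^sub>0)" .
  then have field_ne: "partial_field k\<^sub>0 p \<noteq> 0"
    using x by simp
  have "recover k\<^sub>0 p = w"
    by (simp add: vec_eq_iff recover_def field inversion_minus p_k\<^sub>0 p_k axis_def)
  have "partial_field_derivative k\<^sub>0 p (axis k\<^sub>0 v) = (\<Sum>k\<in>UNIV - {k\<^sub>0}. inversion_derivative (x - w $ k) v)"
    unfolding partial_field_derivative_def p_k\<^sub>0 by (rule sum.cong) (auto simp: p_k axis_def)
  also have "\<dots> = - inversion_derivative (x - w $ k\<^sub>0) v"
    using v(2) by (simp add: hess_f_def sum.remove[of UNIV k\<^sub>0] scaleR_sum_right[symmetric]
        eq_neg_iff_add_eq_0 add.commute)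
  also have "\<dots> = inversion_derivative (inversion (partial_field k\<^sub>0 p)) (- v)"
    unfolding field inversion_minus inversion_inversion
    by (simp only: inversion_derivative_minus_point inversion_derivative_minus)
  finally have "recover_derivative k\<^sub>0 p (axis k\<^sub>0 v) = axis k\<^sub>0 v + axis k\<^sub>0 (- v)"
    by (simp add: recover_derivative_def inversion_derivative_inversion[OF field_ne])
  then have "recover_derivative k\<^sub>0 p (axis k\<^sub>0 v) = 0"
    by (simp add: vec_eq_iff axis_def)
  moreover have "recover_derivative k\<^sub>0 p 0 = 0"
    by (simp add: recover_derivative_def partial_field_derivative_def inversion_derivative_def)
  ultimately have "\<not> inj (recover_derivative k\<^sub>0 p)"
    using v(1) by (metis injD axis_eq_0_iff)
  moreover have "\<forall>k. k \<noteq> k\<^sub>0 \<longrightarrow> p $ k\<^sub>0 \<noteq> p $ k"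
    using x p_k p_k\<^sub>0 by metis
  ultimately show "w \<in> recover k\<^sub>0 `
      {p. (\<forall>k. k \<noteq> k\<^sub>0 \<longrightarrow> p $ k\<^sub>0 \<noteq> p $ k) \<and> partial_field k\<^sub>0 p \<noteq> 0 \<and> \<not> inj (recover_derivative k\<^sub>0 p)}"
    using field_ne \<open>recover k\<^sub>0 p = w\<close> by force
qed

lemma negligible_degenerate_set: "negligible (degenerate_set :: (real^'n^'r) set)"
proof -
  obtain k\<^sub>0 :: 'r where True by blast
  have "negligible (recover k\<^sub>0 `
      {p. (\<forall>k. k \<noteq> k\<^sub>0 \<longrightarrow> p $ k\<^sub>0 \<noteq> p $ k) \<and> partial_field k\<^sub>0 p \<noteq> 0 \<and> \<not> inj (recover_derivative k\<^sub>0 p)})"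
    by (rule negligible_image_singular_derivative[of _ _ "recover_derivative k\<^sub>0"])
       (auto intro: has_derivative_recover)
  with degenerate_set_subset_critical_values show ?thesis
    by (rule negligible_subset[rotated])
qed

lemma f_w_first_order_at_critical_point:
  fixes w :: "real^'n^'r"
  assumes x: "\<forall>k. x \<noteq> w $ k" and crit: "grad_f w x = 0" and nondeg: "inj (hess_f w x)"
    and \<epsilon>: "\<epsilon> > 0"
  obtains \<delta> where "\<delta> > 0" "\<And>w' x'. norm ((w', x') - (w, x)) < \<delta> \<Longrightarrow> grad_f w' x' = 0 \<Longrightarrow>
      \<bar>f_w w' x' - f_w w x - grad_w_f w x \<bullet> (w' - w)\<bar> \<le> \<epsilon> * norm (w' - w)"
proof (rule first_order_along_zero_set[where F = "\<lambda>z. f_w (fst z) (snd z)" and D = "(\<bullet>) (grad_w_f w x)"])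
  show "((\<lambda>z. f_w (fst z) (snd z)) has_derivative (\<lambda>h. grad_w_f w x \<bullet> fst h)) (at (w, x))"
    using has_derivative_f_w_joint[of x w] x crit by simp
  show "((\<lambda>z. grad_f (fst z) (snd z)) has_derivative
      (\<lambda>h. \<Sum>k\<in>UNIV. 2 *\<^sub>R inversion_derivative (x - w $ k) (snd h - fst h $ k))) (at (w, x))"
    using has_derivative_grad_f_joint[of x w] x by simp
  show "inj (\<lambda>h. \<Sum>k\<in>UNIV. 2 *\<^sub>R inversion_derivative (x - w $ k) (snd (0, h) - fst (0, h) $ k))"
    using nondeg by (simp add: hess_f_def[abs_def])
qed (use crit \<epsilon> in auto)

lemma inj_grad_w_f: "inj (grad_w_f (w :: real^'n^'r))"
proof
  obtain k :: 'r where True by blast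
  fix x y assume "grad_w_f w x = grad_w_f w y"
  then have "inversion (x - w $ k) = inversion (y - w $ k)"
    by (simp add: grad_w_f_def vec_eq_iff)
  then show "x = y"
    using injD[OF inj_inversion] by fastforce
qed

lemma negligible_equal_values_set: "negligible (equal_values_set :: (real^'n^'r) set)"
proof -
  define T :: "((real^'n^'r) \<times> (real^'n) \<times> (real^'n)) set" where
    "T = {(w, x, y). (\<forall>k. x \<noteq> w $ k) \<and> (\<forall>k. y \<noteq> w $ k) \<and> x \<noteq> y \<and> grad_f w x = 0 \<and>
       grad_f w y = 0 \<and> inj (hess_f w x) \<and> inj (hess_f w y) \<and> f_w w x = f_w w y}"
  have "equal_values_set \<subseteq> fst ` T"
    unfolding equal_values_set_def T_def by (auto simp: image_iff) (metis fst_conv)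
  moreover have "negligible (fst ` T)"
  proof (rule negligible_fst_image_locally_cone)
    fix t assume "t \<in> T"
    then obtain w x y where t: "t = (w, x, y)" and x: "\<forall>k. x \<noteq> w $ k" and y: "\<forall>k. y \<noteq> w $ k"
      and "x \<noteq> y" and crit: "grad_f w x = 0" "grad_f w y = 0"
      and nondeg: "inj (hess_f w x)" "inj (hess_f w y)" and "f_w w x = f_w w y"
      unfolding T_def by auto
    define \<nu> where "\<nu> = grad_w_f w x - grad_w_f w y"
    have "norm \<nu> > 0"
      using \<open>x \<noteq> y\<close> inj_grad_w_f by (auto simp: \<nu>_def dest: injD)
    then have "norm \<nu> / 4 > 0"
      by simp
    obtain \<delta>\<^sub>x where \<delta>\<^sub>x: "\<delta>\<^sub>x > 0" "\<And>w' x'. norm ((w', x') - (w, x)) < \<delta>\<^sub>x \<Longrightarrow> grad_f w' x' = 0 \<Longrightarrow>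
        \<bar>f_w w' x' - f_w w x - grad_w_f w x \<bullet> (w' - w)\<bar> \<le> norm \<nu> / 4 * norm (w' - w)"
      using f_w_first_order_at_critical_point[OF x crit(1) nondeg(1) \<open>norm \<nu> / 4 > 0\<close>] by blast
    obtain \<delta>\<^sub>y where \<delta>\<^sub>y: "\<delta>\<^sub>y > 0" "\<And>w' y'. norm ((w', y') - (w, y)) < \<delta>\<^sub>y \<Longrightarrow> grad_f w' y' = 0 \<Longrightarrow>
        \<bar>f_w w' y' - f_w w y - grad_w_f w y \<bullet> (w' - w)\<bar> \<le> norm \<nu> / 4 * norm (w' - w)"
      using f_w_first_order_at_critical_point[OF y crit(2) nondeg(2) \<open>norm \<nu> / 4 > 0\<close>] by blast
    show "\<exists>e \<delta>. norm e = 1 \<and> \<delta> > 0 \<and>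
        (\<forall>t'\<in>T. dist t' t < \<delta> \<longrightarrow> \<bar>e \<bullet> (fst t' - fst t)\<bar> \<le> norm (fst t' - fst t) / 2)"
    proof (intro exI[of _ "\<nu> /\<^sub>R norm \<nu>"] exI[of _ "min \<delta>\<^sub>x \<delta>\<^sub>y"] conjI ballI impI)
      show "norm (\<nu> /\<^sub>R norm \<nu>) = 1" "min \<delta>\<^sub>x \<delta>\<^sub>y > 0"
        using \<open>norm \<nu> > 0\<close> \<delta>\<^sub>x(1) \<delta>\<^sub>y(1) by simp_all
      fix t' assume "t' \<in> T" and near: "dist t' t < min \<delta>\<^sub>x \<delta>\<^sub>y"
      then obtain w' x' y' where t': "t' = (w', x', y')" and crit': "grad_f w' x' = 0" "grad_f w' y' = 0"
        and "f_w w' x' = f_w w' y'"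
        unfolding T_def by auto
      have "norm ((w', x') - (w, x)) \<le> dist t' t" "norm ((w', y') - (w, y)) \<le> dist t' t"
        using t t' by (simp_all add: dist_norm norm_Pair)
      then have "\<bar>f_w w' x' - f_w w x - grad_w_f w x \<bullet> (w' - w)\<bar> \<le> norm \<nu> / 4 * norm (w' - w)"
        and "\<bar>f_w w' y' - f_w w y - grad_w_f w y \<bullet> (w' - w)\<bar> \<le> norm \<nu> / 4 * norm (w' - w)"
        using \<delta>\<^sub>x(2)[OF _ crit'(1)] \<delta>\<^sub>y(2)[OF _ crit'(2)] near by simp_all
      moreover have "\<nu> \<bullet> (w' - w) = (f_w w' y' - f_w w y - grad_w_f w y \<bullet> (w' - w))
          - (f_w w' x' - f_w w x - grad_w_f w x \<bullet> (w' - w))"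
        using \<open>f_w w x = f_w w y\<close> \<open>f_w w' x' = f_w w' y'\<close> by (simp add: \<nu>_def inner_diff_left)
      ultimately have "\<bar>\<nu> \<bullet> (w' - w)\<bar> \<le> norm \<nu> / 2 * norm (w' - w)"
        by linarith
      then show "\<bar>(\<nu> /\<^sub>R norm \<nu>) \<bullet> (fst t' - fst t)\<bar> \<le> norm (fst t' - fst t) / 2"
        using \<open>norm \<nu> > 0\<close> t t' by (simp add: abs_mult field_simps)
    qed
  qed
  ultimately show ?thesis
    by (rule negligible_subset[rotated])
qed

lemma closure_eq_UNIV_if_negligible_Compl:
  fixes S :: "'a::euclidean_space set"
  assumes "negligible (- S)"
  shows "closure S = UNIV"
proof -
  have "interior (- S) = {}"
    using open_not_negligible[OF open_interior] negligible_subset[OF assms interior_subset] by blast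
  then show ?thesis
    by (simp add: closure_interior)
qed

theorem proposition6p3:
  assumes "CARD('n) \<ge> 2"
  shows "closure (GL :: (real^'n^'r) set) = UNIV"
proof (rule closure_eq_UNIV_if_negligible_Compl)
  have "negligible (collision_set \<union> degenerate_set \<union> equal_values_set :: (real^'n^'r) set)"
    using negligible_collision_set negligible_degenerate_set negligible_equal_values_set
    by (intro negligible_Un)
  with Compl_GL_subset show "negligible (- (GL :: (real^'n^'r) set))"
    by (rule negligible_subset[rotated])
qed

end
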